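(* Let $\mathcal{V},\mathcal{W}$ be real, separable, infinite-dimensional Hilbert spaces, fix $c>0$, and let $\mathcal{X}=\{v\in\mathcal{V}:\|v\|\le1\}$, $\mathcal{Y}=\{w\in\mathcal{W}:\|w\|\le c\}$, $\mathcal{F}_p=\{f\in S_p(\mathcal{V},\mathcal{W}):\|f\|_p\le c\}$ for $p\in[1,\infty]$. Then for every $n\in\mathbb{N}$, \[\mathcal{E}_n(\mathcal{F}_p)\ge\frac{c^2}{12}\max\big\{n^{-\frac{1}{p-1}},\,n^{-\frac2p}\big\},\] with the conventions $1/p=1/(p-1)=0$ for $p=\infty$ and $n^{-1/(p-1)}=0$ for $p=1$. In particular $\mathcal{E}_n(\mathcal{F}_\infty)\ge c^2/12$ for all $n$, so $\mathcal{F}_\infty$ is not batch learnable.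
   Context: $\|f\|_p$ denotes the $p$-Schatten norm (the $\ell_p$ norm of the singular values; $\|f\|_\infty$ is the supremum of singular values), and $S_p(\mathcal{V},\mathcal{W})$ is the set of compact linear operators with $\|f\|_p<\infty$. Batch setting: a learning rule $\hat f_n$ maps a sample $S=((x_1,y_1),\dots,(x_n,y_n))\in(\mathcal{X}\times\mathcal{Y})^n$ to a predictor $\hat f_n:\mathcal{X}\to\mathcal{Y}$. Its worst-case expected excess risk is \[\mathcal{E}_n(\mathcal{F},\hat f_n)=\sup_{\mathcal{D}}\mathbb{E}_{S\sim\mathcal{D}^n}\Big[\mathbb{E}_{(x,y)\sim\mathcal{D}}\|\hat f_n(x)-y\|^2-\inf_{f\in\mathcal{F}}\mathbb{E}_{(x,y)\sim\mathcal{D}}\|f(x)-y\|^2\Big],\] the supremum being over all distributions $\mathcal{D}$ on $\mathcal{X}\times\mathcal{Y}$, and $\mathcal{E}_n(\mathcal{F})=\inf_{\hat f_n}\mathcal{E}_n(\mathcal{F},\hat f_n)$ over all learning rules. $\mathcal{F}$ is batch learnable iff $\limsup_{n\to\infty}\mathcal{E}_n(\mathcal{F})=0$. *)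

theory Defs
  imports "HOL-Analysis.Analysis" "HOL-Probability.Probability"
begin

definition separable_hilbert :: "'a::{real_inner,complete_space} itself \<Rightarrow> bool" where
  "separable_hilbert _ \<longleftrightarrow> separable_space (euclidean :: 'a topology)"

definition infinite_dimensional :: "'a::real_vector itself \<Rightarrow> bool" where
  "infinite_dimensional _ \<longleftrightarrow> \<not> (\<exists>B :: 'a set. finite B \<and> span B = UNIV)"

definition orthonormal_seq :: "(nat \<Rightarrow> 'a::real_inner) \<Rightarrow> bool" where
  "orthonormal_seq e \<longleftrightarrow> (\<forall>i j. inner (e i) (e j) = (if i = j then 1 else 0))"

text \<open>s is the (non-increasing, null) sequence of singular values of the compact linear
  operator f, given through a singular value (Schmidt) decomposition
  f x = sum_k s_k <e_k, x> u_k with orthonormal (e_k), (u_k).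
  An operator admits such a decomposition iff it is a compact linear operator,
  and then s is uniquely determined (the singular values with multiplicity,
  padded by zeros).\<close>

definition singular_values ::
  "('v::real_inner \<Rightarrow> 'w::real_inner) \<Rightarrow> (nat \<Rightarrow> real) \<Rightarrow> bool" where
  "singular_values f s \<longleftrightarrow>
     (\<forall>k. 0 \<le> s k) \<and> decseq s \<and> s \<longlonglongrightarrow> 0 \<and>
     (\<exists>e u. orthonormal_seq e \<and> orthonormal_seq u \<and>
        (\<forall>x. (\<lambda>k. (s k * inner (e k) x) *\<^sub>R u k) sums f x))"

definition lp_norm :: "ereal \<Rightarrow> (nat \<Rightarrow> real) \<Rightarrow> ereal" where
  "lp_norm p s =
     (if p = \<infinity> then (SUP k. ereal \<bar>s k\<bar>)
      else if summable (\<lambda>k. \<bar>s k\<bar> powr real_of_ereal p)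
      then ereal ((\<Sum>k. \<bar>s k\<bar> powr real_of_ereal p) powr (1 / real_of_ereal p))
      else \<infinity>)"

definition schatten_ball :: "ereal \<Rightarrow> real \<Rightarrow> ('v::real_inner \<Rightarrow> 'w::real_inner) set" where
  "schatten_ball p c = {f. \<exists>s. singular_values f s \<and> lp_norm p s \<le> ereal c}"

definition distributions :: "('x::topological_space) set \<Rightarrow> ('y::topological_space) set
    \<Rightarrow> ('x \<times> 'y) measure set" where
  "distributions X Y = {D. prob_space D \<and> sets D = sets borel \<and> emeasure D (X \<times> Y) = 1}"

definition learning_rules :: "nat \<Rightarrow> ('x::topological_space) set \<Rightarrow> ('y::topological_space) set
    \<Rightarrow> ((nat \<Rightarrow> 'x \<times> 'y) \<Rightarrow> 'x \<Rightarrow> 'y) set" where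
  "learning_rules n X Y = {L.
     (\<forall>S \<in> PiE {..<n} (\<lambda>_. X \<times> Y). \<forall>x\<in>X. L S x \<in> Y) \<and>
     (\<lambda>(S, x). L S x) \<in> borel_measurable (PiM {..<n} (\<lambda>_. borel) \<Otimes>\<^sub>M borel)}"

definition risk :: "('x \<times> 'y::real_normed_vector) measure \<Rightarrow> ('x \<Rightarrow> 'y) \<Rightarrow> ennreal" where
  "risk D h = (\<integral>\<^sup>+ z. ennreal ((norm (h (fst z) - snd z))\<^sup>2) \<partial>D)"

definition excess_risk :: "nat \<Rightarrow> ('x \<Rightarrow> 'y::real_normed_vector) set
    \<Rightarrow> ((nat \<Rightarrow> 'x \<times> 'y) \<Rightarrow> 'x \<Rightarrow> 'y) \<Rightarrow> ('x \<times> 'y) measure \<Rightarrow> ereal" where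
  "excess_risk n F L D =
     ereal (enn2real (\<integral>\<^sup>+ S. risk D (L S) \<partial>(PiM {..<n} (\<lambda>_. D))))
     - ereal (enn2real (INF f\<in>F. risk D f))"

definition worst_case_risk :: "nat \<Rightarrow> ('x::topological_space) set \<Rightarrow> ('y::real_normed_vector) set
    \<Rightarrow> ('x \<Rightarrow> 'y) set \<Rightarrow> ((nat \<Rightarrow> 'x \<times> 'y) \<Rightarrow> 'x \<Rightarrow> 'y) \<Rightarrow> ereal" where
  "worst_case_risk n X Y F L = (SUP D\<in>distributions X Y. excess_risk n F L D)"

definition minimax_risk :: "nat \<Rightarrow> ('x::topological_space) set \<Rightarrow> ('y::real_normed_vector) set
    \<Rightarrow> ('x \<Rightarrow> 'y) set \<Rightarrow> ereal" where
  "minimax_risk n X Y F = (INF L\<in>learning_rules n X Y. worst_case_risk n X Y F L)"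

definition schatten_rate :: "ereal \<Rightarrow> nat \<Rightarrow> real" where
  "schatten_rate p n =
     (if p = \<infinity> then 1
      else max (if p = 1 then 0 else real n powr (- 1 / (real_of_ereal p - 1)))
               (real n powr (- 2 / real_of_ereal p)))"

end

theory Submission
  imports Defs
begin

text \<open>
  Fix orthonormal sequences e in V and u in W, and for a sign pattern \<sigma> let D(\<sigma>) be the
  uniform distribution on the m points (e i, \<plusminus>b u i), the sign given by \<sigma> i. If index i does
  not occur in the sample, flipping \<sigma> i changes the target at e i but not the prediction, so
  averaged over \<sigma> every learning rule pays b^2 on each unseen index; hence some D(\<sigma>) forces
  expected risk at least ((m-1)/m)^n b^2. The operator e i \<mapsto> \<plusminus>s u i (rank m, all nonzero
  singular values equal to s) has risk (b-s)^2. Taking m = 2n and b = s = c (2n)^(-1/p) gives the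
  rate n^(-2/p); taking b = c, s = c m^(-1/p) and m \<approx> (2n)^(p/(p-1)) gives n^(-1/(p-1)).
\<close>

lemma exists_unit_orthogonal_to_finite:
  fixes B :: "'a::real_inner set"
  assumes "infinite_dimensional TYPE('a)" and "finite B"
    and orth: "\<And>b b'. b \<in> B \<Longrightarrow> b' \<in> B \<Longrightarrow> inner b b' = (if b = b' then 1 else 0)"
  shows "\<exists>v. norm v = 1 \<and> (\<forall>b\<in>B. inner b v = 0)"
proof -
  have "span B \<noteq> UNIV"
    using assms(1,2) unfolding infinite_dimensional_def by blast
  then obtain x where x: "x \<notin> span B" by blast
  define w where "w = x - (\<Sum>b\<in>B. inner b x *\<^sub>R b)"
  have w_orth: "inner b w = 0" if "b \<in> B" for b
  proof -
    have "(\<Sum>b'\<in>B. inner b' x * inner b b') = (\<Sum>b'\<in>B. if b' = b then inner b x else 0)"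
      using that orth by (intro sum.cong) (auto simp: inner_commute)
    also have "\<dots> = inner b x" using that \<open>finite B\<close> by simp
    finally show ?thesis by (simp add: w_def inner_diff_right inner_sum_right mult.commute)
  qed
  have "w \<noteq> 0"
    using x span_sum[of B "\<lambda>b. inner b x *\<^sub>R b"] by (auto simp: w_def span_base span_scale)
  then show ?thesis
    by (intro exI[of _ "w /\<^sub>R norm w"]) (simp add: w_orth)
qed

primrec orthonormal_prefix :: "nat \<Rightarrow> nat \<Rightarrow> 'a::real_inner" where
  "orthonormal_prefix 0 = (\<lambda>_. 0)"
| "orthonormal_prefix (Suc n) = (orthonormal_prefix n)
     (n := SOME v. norm v = 1 \<and> (\<forall>k<n. inner (orthonormal_prefix n k) v = 0))"

lemma orthonormal_prefix_stable: "k < n \<Longrightarrow> orthonormal_prefix (n + d) k = orthonormal_prefix n k"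
  by (induction d) auto

lemma orthonormal_prefix_orthonormal:
  assumes "infinite_dimensional TYPE('a::real_inner)" and "j < n" and "k < n"
  shows "inner (orthonormal_prefix n j :: 'a) (orthonormal_prefix n k) = (if j = k then 1 else 0)"
  using assms(2,3)
proof (induction n arbitrary: j k)
  case 0
  then show ?case by simp
next
  case (Suc n)
  let ?P = "orthonormal_prefix n :: nat \<Rightarrow> 'a"
  have "\<exists>v. norm v = 1 \<and> (\<forall>b\<in>?P ` {..<n}. inner b v = 0)"
  proof (rule exists_unit_orthogonal_to_finite[OF assms(1)])
    fix b b' assume "b \<in> ?P ` {..<n}" "b' \<in> ?P ` {..<n}"
    then show "inner b b' = (if b = b' then 1 else 0)"
      using Suc.IH by (auto split: if_splits)
  qed simp
  then have ex: "\<exists>v. norm v = 1 \<and> (\<forall>k<n. inner (?P k) v = 0)" by auto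
  define v where "v = (SOME v. norm v = 1 \<and> (\<forall>k<n. inner (?P k) v = 0))"
  note v = someI_ex[OF ex, folded v_def]
  have P_Suc: "orthonormal_prefix (Suc n) = ?P(n := v)"
    by (simp add: v_def)
  have "inner v v = 1" using v by (simp add: dot_square_norm)
  then show ?case
    unfolding P_Suc using Suc v by (auto simp: less_Suc_eq inner_commute)
qed

lemma orthonormal_seq_exists:
  assumes "infinite_dimensional TYPE('a::real_inner)"
  shows "\<exists>e::nat \<Rightarrow> 'a. orthonormal_seq e"
proof -
  define e where "e k = (orthonormal_prefix (Suc k) k :: 'a)" for k
  have e_eq: "e k = orthonormal_prefix N k" if "k < N" for k N
    using orthonormal_prefix_stable[of k "Suc k" "N - Suc k"] that
    unfolding e_def by (simp del: orthonormal_prefix.simps add: eq_commute)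
  have "inner (e j) (e k) = (if j = k then 1 else 0)" for j k
    using orthonormal_prefix_orthonormal[OF assms, of j "Suc (max j k)" k]
    by (simp del: orthonormal_prefix.simps add: e_eq[of j "Suc (max j k)"] e_eq[of k "Suc (max j k)"])
  then show ?thesis unfolding orthonormal_seq_def by blast
qed

lemma nn_integral_finite_support:
  assumes "finite A" and "AE x in M. x \<in> A" and "\<And>a. a \<in> A \<Longrightarrow> {a} \<in> sets M"
  shows "(\<integral>\<^sup>+x. f x \<partial>M) = (\<Sum>a\<in>A. f a * emeasure M {a})"
proof -
  have "(\<integral>\<^sup>+x. f x \<partial>M) = (\<integral>\<^sup>+x. f x * indicator A x \<partial>M)"
    using assms(2) by (intro nn_integral_cong_AE) (auto simp: indicator_def)
  also have "\<dots> = (\<Sum>a\<in>A. f a * emeasure M {a})"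
    using assms(1,3) by (rule nn_integral_indicator_finite)
  finally show ?thesis .
qed

lemma nn_integral_PiM_finite_support:
  assumes "finite K" and "prob_space M" and "finite A" and "A \<in> sets M" and "emeasure M A = 1"
    and singleton: "\<And>a. a \<in> A \<Longrightarrow> {a} \<in> sets M"
  shows "(\<integral>\<^sup>+x. F x \<partial>PiM K (\<lambda>_. M)) = (\<Sum>x\<in>PiE K (\<lambda>_. A). F x * (\<Prod>k\<in>K. emeasure M {x k}))"
proof -
  interpret product_prob_space "\<lambda>_. M" by (intro product_prob_spaceI assms(2))
  interpret PiM: prob_space "PiM K (\<lambda>_. M)" by (intro prob_space_PiM assms(2))
  have point: "{x} = PiE K (\<lambda>k. {x k})" if "x \<in> PiE K (\<lambda>_. A)" for x
    using that by (intro PiE_singleton[symmetric]) (auto simp: PiE_iff)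
  have "PiE K (\<lambda>_. A) \<in> PiM.events" using assms(1,4) by (intro sets_PiM_I_finite) auto
  moreover have "emeasure (PiM K (\<lambda>_. M)) (PiE K (\<lambda>_. A)) = 1"
    using assms(1,4,5) by (simp add: emeasure_PiM)
  ultimately have "AE x in PiM K (\<lambda>_. M). x \<in> PiE K (\<lambda>_. A)"
    by (simp add: PiM.AE_in_set_eq_1 PiM.emeasure_eq_measure)
  then have "(\<integral>\<^sup>+x. F x \<partial>PiM K (\<lambda>_. M))
      = (\<Sum>x\<in>PiE K (\<lambda>_. A). F x * emeasure (PiM K (\<lambda>_. M)) {x})"
    using assms(1,3) singleton point
    by (intro nn_integral_finite_support) (auto simp: finite_PiE PiE_iff intro!: sets_PiM_I_finite)
  also have "\<dots> = (\<Sum>x\<in>PiE K (\<lambda>_. A). F x * (\<Prod>k\<in>K. emeasure M {x k}))"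
    using assms(1) singleton point by (intro sum.cong refl) (auto simp: emeasure_PiM PiE_iff)
  finally show ?thesis .
qed

lemma bij_betw_compose_PiE:
  assumes "inj_on g A"
  shows "bij_betw (compose K g) (PiE K (\<lambda>_. A)) (PiE K (\<lambda>_. g ` A))"
proof (rule bij_betwI[where g = "compose K (inv_into A g)"])
  show "compose K (inv_into A g) (compose K g x) = x" if "x \<in> PiE K (\<lambda>_. A)" for x
    using that assms by (auto simp: compose_def PiE_iff extensional_def fun_eq_iff)
  show "compose K g (compose K (inv_into A g) y) = y" if "y \<in> PiE K (\<lambda>_. g ` A)" for y
    using that by (auto simp: compose_def PiE_iff extensional_def fun_eq_iff f_inv_into_f)
qed (auto simp: compose_def PiE_iff inv_into_into)

definition uniform_points :: "nat \<Rightarrow> (nat \<Rightarrow> 'a::topological_space) \<Rightarrow> 'a measure" where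
  "uniform_points m g = distr (measure_pmf (pmf_of_set {..<m})) borel g"

lemma sets_uniform_points [simp, measurable_cong]: "sets (uniform_points m g) = sets borel"
  by (simp add: uniform_points_def)

lemma prob_space_uniform_points: "0 < m \<Longrightarrow> prob_space (uniform_points m g)"
  unfolding uniform_points_def
  by (intro prob_space.prob_space_distr measure_pmf.prob_space_axioms) simp

lemma emeasure_uniform_points:
  assumes "0 < m" and "A \<in> sets borel"
  shows "emeasure (uniform_points m g) A = ennreal (card ({..<m} \<inter> g -` A) / m)"
proof -
  have "emeasure (measure_pmf (pmf_of_set {..<m})) (g -` A) = ennreal (card ({..<m} \<inter> g -` A) / m)"
    using assms(1) by (subst emeasure_pmf_of_set) auto
  then show ?thesis
    using assms(2) unfolding uniform_points_def by (subst emeasure_distr) auto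
qed

lemma emeasure_uniform_points_singleton:
  fixes g :: "nat \<Rightarrow> 'a::t1_space"
  assumes "0 < m" and "inj_on g {..<m}" and "i < m"
  shows "emeasure (uniform_points m g) {g i} = ennreal (1 / m)"
proof -
  have "{..<m} \<inter> g -` {g i} = {i}" using assms(2,3) by (auto dest: inj_onD)
  then show ?thesis using assms(1) by (simp add: emeasure_uniform_points)
qed

lemma emeasure_uniform_points_support:
  fixes g :: "nat \<Rightarrow> 'a::t1_space"
  assumes "0 < m"
  shows "emeasure (uniform_points m g) (g ` {..<m}) = 1"
  using assms by (simp add: emeasure_uniform_points finite_imp_closed Int_absorb2 subset_eq)

lemma nn_integral_uniform_points:
  fixes g :: "nat \<Rightarrow> 'a::t1_space"
  assumes "0 < m" and inj: "inj_on g {..<m}"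
  shows "(\<integral>\<^sup>+z. f z \<partial>uniform_points m g) = (\<Sum>i<m. f (g i) * ennreal (1 / m))"
proof -
  interpret prob_space "uniform_points m g" by (rule prob_space_uniform_points[OF assms(1)])
  have "AE z in uniform_points m g. z \<in> g ` {..<m}"
    using emeasure_uniform_points_support[OF assms(1), of g]
    by (subst AE_in_set_eq_1) (auto simp: finite_imp_closed emeasure_eq_measure)
  then have "(\<integral>\<^sup>+z. f z \<partial>uniform_points m g) = (\<Sum>z\<in>g ` {..<m}. f z * emeasure (uniform_points m g) {z})"
    by (intro nn_integral_finite_support) auto
  also have "\<dots> = (\<Sum>i<m. f (g i) * ennreal (1 / m))"
    using assms by (simp add: sum.reindex emeasure_uniform_points_singleton)
  finally show ?thesis .
qed

lemma nn_integral_PiM_uniform_points: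
  fixes g :: "nat \<Rightarrow> 'a::t1_space"
  assumes "finite K" and "0 < m" and inj: "inj_on g {..<m}"
  shows "(\<integral>\<^sup>+S. F S \<partial>PiM K (\<lambda>_. uniform_points m g))
     = (\<Sum>I\<in>PiE K (\<lambda>_. {..<m}). F (compose K g I) * ennreal ((1 / m) ^ card K))"
proof -
  have "(\<integral>\<^sup>+S. F S \<partial>PiM K (\<lambda>_. uniform_points m g))
      = (\<Sum>S\<in>PiE K (\<lambda>_. g ` {..<m}). F S * (\<Prod>k\<in>K. emeasure (uniform_points m g) {S k}))"
    using assms(1,2) prob_space_uniform_points emeasure_uniform_points_support
    by (intro nn_integral_PiM_finite_support) (auto simp: finite_imp_closed)
  also have "\<dots> = (\<Sum>I\<in>PiE K (\<lambda>_. {..<m}).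
      F (compose K g I) * (\<Prod>k\<in>K. emeasure (uniform_points m g) {compose K g I k}))"
    by (rule sum.reindex_bij_betw[OF bij_betw_compose_PiE[OF inj], symmetric])
  also have "\<dots> = (\<Sum>I\<in>PiE K (\<lambda>_. {..<m}). F (compose K g I) * ennreal ((1 / m) ^ card K))"
    using assms by (intro sum.cong refl)
      (auto simp: compose_eq PiE_iff emeasure_uniform_points_singleton prod_ennreal ennreal_power)
  finally show ?thesis .
qed

lemma sum_sq_norm_diff_involution_ge:
  fixes V Y :: "'s \<Rightarrow> 'w::real_inner"
  assumes "bij_betw \<phi> S S" and "\<And>x. x \<in> S \<Longrightarrow> V (\<phi> x) = V x"
    and "\<And>x. x \<in> S \<Longrightarrow> Y (\<phi> x) = - Y x" and "\<And>x. x \<in> S \<Longrightarrow> b \<le> norm (Y x)" and "0 \<le> b"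
  shows "real (card S) * b\<^sup>2 \<le> (\<Sum>x\<in>S. (norm (V x - Y x))\<^sup>2)"
proof -
  define h where "h x = (norm (V x - Y x))\<^sup>2" for x
  have "2 * (real (card S) * b\<^sup>2) = (\<Sum>x\<in>S. 2 * b\<^sup>2)" by simp
  also have "\<dots> \<le> (\<Sum>x\<in>S. h x + h (\<phi> x))"
  proof (rule sum_mono)
    fix x assume x: "x \<in> S"
    have "h x + h (\<phi> x) = 2 * (norm (V x))\<^sup>2 + 2 * (norm (Y x))\<^sup>2"
      using assms(2,3)[OF x]
      by (simp add: h_def power2_norm_eq_inner inner_diff_left inner_diff_right
          inner_add_left inner_add_right inner_commute)
    moreover have "b\<^sup>2 \<le> (norm (Y x))\<^sup>2" using assms(4)[OF x] assms(5) by (rule power_mono)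
    ultimately show "2 * b\<^sup>2 \<le> h x + h (\<phi> x)" using zero_le_power2[of "norm (V x)"] by linarith
  qed
  also have "\<dots> = 2 * (\<Sum>x\<in>S. h x)"
    using sum.reindex_bij_betw[OF assms(1), of h] by (simp add: sum.distrib)
  finally show ?thesis by (simp add: h_def)
qed

lemma sum_card_not_in_image_PiE:
  assumes "finite K"
  shows "(\<Sum>I\<in>PiE K (\<lambda>_. {..<m::nat}). real (card {i\<in>{..<m}. i \<notin> I ` K}))
         = real m * real (m - 1) ^ card K"
proof -
  have "(\<Sum>I\<in>PiE K (\<lambda>_. {..<m}). real (card {i\<in>{..<m}. i \<notin> I ` K}))
      = (\<Sum>I\<in>PiE K (\<lambda>_. {..<m}). \<Sum>i<m. of_bool (i \<notin> I ` K))"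
    by (simp add: sum.If_cases Int_def of_bool_def)
  also have "\<dots> = (\<Sum>i<m. real (card {I \<in> PiE K (\<lambda>_. {..<m}). i \<notin> I ` K}))"
    using assms by (subst sum.swap) (simp add: sum.If_cases of_bool_def Int_def finite_PiE)
  also have "\<dots> = (\<Sum>i<m. real (card (PiE K (\<lambda>_. {..<m} - {i}))))"
    by (intro sum.cong refl arg_cong[where f = "\<lambda>A. real (card A)"]) (auto simp: PiE_iff extensional_def)
  also have "\<dots> = real m * real (m - 1) ^ card K"
    using assms by (cases m) (simp_all add: card_PiE)
  finally show ?thesis .
qed

lemma orthonormal_seq_norm: "orthonormal_seq e \<Longrightarrow> norm (e i) = 1"
  unfolding orthonormal_seq_def by (metis norm_eq_sqrt_inner real_sqrt_one)

lemma orthonormal_seq_inj: "orthonormal_seq e \<Longrightarrow> inj e"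
  unfolding orthonormal_seq_def inj_def by (metis zero_neq_one)

definition signed_target :: "real \<Rightarrow> (nat \<Rightarrow> 'w::real_vector) \<Rightarrow> (nat \<Rightarrow> bool) \<Rightarrow> nat \<Rightarrow> 'w" where
  "signed_target b u \<sigma> i = (if \<sigma> i then b else - b) *\<^sub>R u i"

definition sign_distribution :: "nat \<Rightarrow> (nat \<Rightarrow> 'v::real_inner) \<Rightarrow> real \<Rightarrow> (nat \<Rightarrow> 'w::real_inner)
    \<Rightarrow> (nat \<Rightarrow> bool) \<Rightarrow> ('v \<times> 'w) measure" where
  "sign_distribution m e b u \<sigma> = uniform_points m (\<lambda>i. (e i, signed_target b u \<sigma> i))"

lemma orthonormal_seq_inj_on_pair: "orthonormal_seq e \<Longrightarrow> inj_on (\<lambda>i. (e i, y i)) A"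
  using orthonormal_seq_inj[of e] by (auto simp: inj_on_def inj_def)

lemma risk_sign_distribution:
  assumes "0 < m" and "orthonormal_seq e"
  shows "risk (sign_distribution m e b u \<sigma>) h
     = ennreal ((\<Sum>i<m. (norm (h (e i) - signed_target b u \<sigma> i))\<^sup>2) / m)"
  using assms unfolding risk_def sign_distribution_def
  by (simp add: nn_integral_uniform_points orthonormal_seq_inj_on_pair sum_divide_distrib
      ennreal_mult'[symmetric] sum_ennreal)

lemma expected_risk_sign_distribution:
  assumes "0 < m" and "orthonormal_seq e"
  shows "enn2real (\<integral>\<^sup>+S. risk (sign_distribution m e b u \<sigma>) (L S)
             \<partial>PiM {..<n} (\<lambda>_. sign_distribution m e b u \<sigma>))
     = (\<Sum>I\<in>PiE {..<n} (\<lambda>_. {..<m}). \<Sum>i<m.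
          (norm (L (compose {..<n} (\<lambda>i. (e i, signed_target b u \<sigma> i)) I) (e i)
            - signed_target b u \<sigma> i))\<^sup>2) / m ^ Suc n"
    (is "_ = (\<Sum>I\<in>?P. ?W I) / _")
proof -
  have "(\<integral>\<^sup>+S. risk (sign_distribution m e b u \<sigma>) (L S)
         \<partial>PiM {..<n} (\<lambda>_. sign_distribution m e b u \<sigma>))
      = (\<Sum>I\<in>?P. risk (sign_distribution m e b u \<sigma>)
           (L (compose {..<n} (\<lambda>i. (e i, signed_target b u \<sigma> i)) I)) * ennreal ((1 / m) ^ n))"
    unfolding sign_distribution_def
    using assms by (simp add: nn_integral_PiM_uniform_points orthonormal_seq_inj_on_pair)
  also have "\<dots> = (\<Sum>I\<in>?P. ennreal (?W I / m) * ennreal ((1 / m) ^ n))"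
    using assms by (simp add: risk_sign_distribution)
  also have "\<dots> = (\<Sum>I\<in>?P. ennreal (?W I / m ^ Suc n))"
    by (intro sum.cong refl)
      (simp add: ennreal_mult[symmetric] sum_nonneg power_one_over mult.commute)
  also have "\<dots> = ennreal ((\<Sum>I\<in>?P. ?W I) / m ^ Suc n)"
    by (simp add: sum_ennreal sum_nonneg sum_divide_distrib)
  finally show ?thesis by (simp add: sum_nonneg)
qed

lemma sum_signs_sq_error_ge:
  fixes V :: "(nat \<Rightarrow> bool) \<Rightarrow> nat \<Rightarrow> 'w::real_inner"
  assumes flip: "\<And>\<sigma> i. i < m \<Longrightarrow> i \<notin> J \<Longrightarrow> V (\<sigma>(i := \<not> \<sigma> i)) i = V \<sigma> i"
    and u: "orthonormal_seq u" and b: "0 \<le> b"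
  shows "real (card {i\<in>{..<m}. i \<notin> J}) * (2 ^ m * b\<^sup>2)
    \<le> (\<Sum>\<sigma>\<in>PiE {..<m} (\<lambda>_. UNIV). \<Sum>i<m. (norm (V \<sigma> i - signed_target b u \<sigma> i))\<^sup>2)"
proof -
  define Signs where "Signs = PiE {..<m} (\<lambda>_. UNIV :: bool set)"
  define err where "err \<sigma> i = (norm (V \<sigma> i - signed_target b u \<sigma> i))\<^sup>2" for \<sigma> i
  have unseen: "2 ^ m * b\<^sup>2 \<le> (\<Sum>\<sigma>\<in>Signs. err \<sigma> i)" if i: "i \<in> {i\<in>{..<m}. i \<notin> J}" for i
  proof -
    define flip where "flip \<sigma> = \<sigma>(i := \<not> \<sigma> i)" for \<sigma> :: "nat \<Rightarrow> bool"
    have "bij_betw flip Signs Signs"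
      using i by (intro bij_betwI[where g = flip]) (auto simp: flip_def Signs_def PiE_iff extensional_def)
    then have "real (card Signs) * b\<^sup>2 \<le> (\<Sum>\<sigma>\<in>Signs. err \<sigma> i)"
      unfolding err_def using i b orthonormal_seq_norm[OF u] assms(1)
      by (intro sum_sq_norm_diff_involution_ge[where \<phi> = flip]) (auto simp: flip_def signed_target_def)
    then show ?thesis by (simp add: Signs_def card_PiE)
  qed
  have "real (card {i\<in>{..<m}. i \<notin> J}) * (2 ^ m * b\<^sup>2) = (\<Sum>i\<in>{i\<in>{..<m}. i \<notin> J}. 2 ^ m * b\<^sup>2)"
    by simp
  also have "\<dots> \<le> (\<Sum>i\<in>{i\<in>{..<m}. i \<notin> J}. \<Sum>\<sigma>\<in>Signs. err \<sigma> i)" using unseen by (rule sum_mono)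
  also have "\<dots> \<le> (\<Sum>i<m. \<Sum>\<sigma>\<in>Signs. err \<sigma> i)"
    by (intro sum_mono2) (auto simp: err_def intro!: sum_nonneg)
  finally show ?thesis unfolding Signs_def err_def by (subst sum.swap)
qed

lemma exists_sign_expected_risk_ge:
  fixes e :: "nat \<Rightarrow> 'v::real_inner" and u :: "nat \<Rightarrow> 'w::real_inner"
    and L :: "(nat \<Rightarrow> 'v \<times> 'w) \<Rightarrow> 'v \<Rightarrow> 'w"
  assumes e: "orthonormal_seq e" and u: "orthonormal_seq u" and m: "0 < m" and b: "0 \<le> b"
  shows "\<exists>\<sigma>. ((real m - 1) / m) ^ n * b\<^sup>2
     \<le> enn2real (\<integral>\<^sup>+S. risk (sign_distribution m e b u \<sigma>) (L S)
                   \<partial>PiM {..<n} (\<lambda>_. sign_distribution m e b u \<sigma>))"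
proof -
  let ?K = "{..<n}" and ?P = "PiE {..<n} (\<lambda>_. {..<m})"
  define Signs where "Signs = PiE {..<m} (\<lambda>_. UNIV :: bool set)"
  define W where "W \<sigma> I i = (norm (L (compose ?K (\<lambda>i. (e i, signed_target b u \<sigma> i)) I) (e i)
    - signed_target b u \<sigma> i))\<^sup>2" for \<sigma> I i
  define R where "R \<sigma> = (\<Sum>I\<in>?P. \<Sum>i<m. W \<sigma> I i) / m ^ Suc n" for \<sigma>
  have fin: "finite Signs" "Signs \<noteq> {}" by (simp_all add: Signs_def finite_PiE PiE_eq_empty_iff)
  \<comment> \<open>A learner given the sample indexed by I does not see the signs of indices outside I ` {..<n}.\<close>
  define unseen where "unseen I = {i\<in>{..<m}. i \<notin> I ` ?K}" for I :: "nat \<Rightarrow> nat"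
  have per_sample: "real (card (unseen I)) * (2 ^ m * b\<^sup>2) \<le> (\<Sum>\<sigma>\<in>Signs. \<Sum>i<m. W \<sigma> I i)" for I
    unfolding Signs_def W_def unseen_def using u b
    by (intro sum_signs_sq_error_ge) (auto simp: compose_def signed_target_def intro!: arg_cong2[where f = L] restrict_ext)
  have "2 ^ m * (((real m - 1) / m) ^ n * b\<^sup>2)
      = (\<Sum>I\<in>?P. real (card (unseen I))) * (2 ^ m * b\<^sup>2) / m ^ Suc n"
    using m sum_card_not_in_image_PiE[of ?K m] unfolding unseen_def by (simp add: of_nat_diff power_divide)
  also have "\<dots> \<le> (\<Sum>I\<in>?P. \<Sum>\<sigma>\<in>Signs. \<Sum>i<m. W \<sigma> I i) / m ^ Suc n"
    by (intro divide_right_mono) (auto simp: sum_distrib_right intro!: sum_mono per_sample)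
  also have "\<dots> = (\<Sum>\<sigma>\<in>Signs. R \<sigma>)"
    unfolding R_def by (subst sum.swap) (simp add: sum_divide_distrib)
  also have "\<dots> \<le> real (card Signs) * Max (R ` Signs)"
    using fin by (intro sum_bounded_above) simp
  finally have "((real m - 1) / m) ^ n * b\<^sup>2 \<le> Max (R ` Signs)"
    by (simp add: Signs_def card_PiE)
  moreover have "Max (R ` Signs) \<in> R ` Signs" using fin by (intro Max_in) auto
  then obtain \<sigma> where "Max (R ` Signs) = R \<sigma>" by auto
  moreover have "R \<sigma> = enn2real (\<integral>\<^sup>+S. risk (sign_distribution m e b u \<sigma>) (L S)
      \<partial>PiM {..<n} (\<lambda>_. sign_distribution m e b u \<sigma>))"
    unfolding R_def W_def by (rule expected_risk_sign_distribution[OF m e, symmetric])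
  ultimately show ?thesis by (intro exI[of _ \<sigma>]) simp
qed

lemma sign_distribution_in_distributions:
  assumes "0 < m" and "orthonormal_seq e" and "orthonormal_seq u" and "0 \<le> b" and "b \<le> c"
  shows "sign_distribution m e b u \<sigma> \<in> distributions (cball 0 1) (cball 0 c)"
proof -
  have "{..<m} \<inter> (\<lambda>i. (e i, signed_target b u \<sigma> i)) -` (cball 0 1 \<times> cball 0 c) = {..<m}"
    using assms(2-5) by (auto simp: signed_target_def orthonormal_seq_norm)
  then show ?thesis
    using assms(1) prob_space_uniform_points
    by (simp add: distributions_def sign_distribution_def emeasure_uniform_points closed_Times)
qed

lemma orthonormal_seq_signed_target: "orthonormal_seq u \<Longrightarrow> orthonormal_seq (signed_target 1 u \<sigma>)"
  unfolding orthonormal_seq_def signed_target_def by auto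

lemma singular_values_finite_rank:
  assumes "orthonormal_seq e" and "orthonormal_seq u" and "0 \<le> s"
  shows "singular_values (\<lambda>x. \<Sum>k<m. (s * inner (e k) x) *\<^sub>R u k) (\<lambda>k. if k < m then s else 0)"
proof -
  have "(\<lambda>k. if k < m then s else 0) \<longlonglongrightarrow> 0"
    by (rule tendsto_eventually) (auto simp: eventually_sequentially intro: exI[of _ m])
  moreover have "(\<lambda>k. ((if k < m then s else 0) * inner (e k) x) *\<^sub>R u k) sums
      (\<Sum>k<m. (s * inner (e k) x) *\<^sub>R u k)" for x
    using sums_finite[of "{..<m}" "\<lambda>k. ((if k < m then s else 0) * inner (e k) x) *\<^sub>R u k"] by simp
  ultimately show ?thesis
    using assms unfolding singular_values_def decseq_def by auto
qed

lemma minimax_risk_ge_sign_bound: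
  fixes p :: ereal
  assumes "infinite_dimensional TYPE('v::real_inner)" and "infinite_dimensional TYPE('w::real_inner)"
    and m: "0 < m" and s: "0 \<le> s" "s \<le> b" and bc: "b \<le> c"
    and lp: "lp_norm p (\<lambda>k. if k < m then s else 0) \<le> ereal c"
  shows "ereal (((real m - 1) / m) ^ n * b\<^sup>2 - (b - s)\<^sup>2)
     \<le> minimax_risk n (cball (0::'v) 1) (cball (0::'w) c) (schatten_ball p c)"
  unfolding minimax_risk_def
proof (rule INF_greatest)
  fix L :: "(nat \<Rightarrow> 'v \<times> 'w) \<Rightarrow> 'v \<Rightarrow> 'w"
  obtain e :: "nat \<Rightarrow> 'v" where e: "orthonormal_seq e" using orthonormal_seq_exists[OF assms(1)] ..
  obtain u :: "nat \<Rightarrow> 'w" where u: "orthonormal_seq u" using orthonormal_seq_exists[OF assms(2)] ..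
  have b: "0 \<le> b" using s by simp
  obtain \<sigma> where \<sigma>: "((real m - 1) / m) ^ n * b\<^sup>2
     \<le> enn2real (\<integral>\<^sup>+S. risk (sign_distribution m e b u \<sigma>) (L S)
                   \<partial>PiM {..<n} (\<lambda>_. sign_distribution m e b u \<sigma>))"
    using exists_sign_expected_risk_ge[OF e u m b] by blast
  define D where "D = sign_distribution m e b u \<sigma>"
  define f where "f x = (\<Sum>k<m. (s * inner (e k) x) *\<^sub>R signed_target 1 u \<sigma> k)" for x
  have f_in: "f \<in> schatten_ball p c"
    using singular_values_finite_rank[OF e orthonormal_seq_signed_target[OF u] s(1)] lp
    unfolding schatten_ball_def f_def by blast
  have fe: "f (e i) = signed_target s u \<sigma> i" if "i < m" for i
  proof -
    have "f (e i) = (\<Sum>k<m. if k = i then s *\<^sub>R signed_target 1 u \<sigma> k else 0)"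
      unfolding f_def using e by (intro sum.cong) (auto simp: orthonormal_seq_def)
    then show ?thesis using that by (simp add: signed_target_def)
  qed
  have "(norm (signed_target s u \<sigma> i - signed_target b u \<sigma> i))\<^sup>2 = (b - s)\<^sup>2" for i
    using orthonormal_seq_norm[OF u, of i]
    by (cases "\<sigma> i") (auto simp: signed_target_def power2_commute simp flip: scaleR_diff_left)
  then have "risk D f = ennreal ((b - s)\<^sup>2)"
    using m e by (simp add: D_def risk_sign_distribution fe)
  then have "(INF g\<in>schatten_ball p c. risk D g) \<le> ennreal ((b - s)\<^sup>2)"
    using INF_lower[OF f_in, of "risk D"] by simp
  then have "enn2real (INF g\<in>schatten_ball p c. risk D g) \<le> (b - s)\<^sup>2"
    using enn2real_mono by fastforce
  then have "ereal (((real m - 1) / m) ^ n * b\<^sup>2 - (b - s)\<^sup>2) \<le> excess_risk n (schatten_ball p c) L D"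
    using \<sigma> unfolding excess_risk_def D_def by simp
  also have "\<dots> \<le> worst_case_risk n (cball 0 1) (cball 0 c) (schatten_ball p c) L"
    unfolding worst_case_risk_def D_def
    using sign_distribution_in_distributions[OF m e u b bc] by (rule SUP_upper)
  finally show "ereal (((real m - 1) / m) ^ n * b\<^sup>2 - (b - s)\<^sup>2)
      \<le> worst_case_risk n (cball 0 1) (cball 0 c) (schatten_ball p c) L" .
qed

lemma bernoulli_ratio: "0 < m \<Longrightarrow> 1 - real n / m \<le> ((real m - 1) / m) ^ n"
  using Bernoulli_inequality[of "- 1 / real m" n] by (simp add: field_simps)

lemma half_le_ratio_power: "1 \<le> n \<Longrightarrow> 1 / 2 \<le> ((real (2 * n) - 1) / real (2 * n)) ^ n"
  using bernoulli_ratio[of "2 * n" n] by simp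

lemma lp_norm_const_prefix:
  assumes "0 < q" and "0 \<le> s"
  shows "lp_norm (ereal q) (\<lambda>k. if k < m then s else 0) = ereal (real m powr (1 / q) * s)"
proof -
  let ?f = "\<lambda>k. \<bar>if k < m then s else 0\<bar> powr q"
  have "?f sums (\<Sum>k<m. ?f k)" by (rule sums_finite) auto
  then have "?f sums (real m * s powr q)" using assms(2) by simp
  moreover have "(real m * s powr q) powr (1 / q) = real m powr (1 / q) * s"
    using assms by (simp add: powr_mult powr_powr)
  ultimately show ?thesis
    unfolding lp_norm_def by (simp add: sums_iff)
qed

lemma lp_norm_infinity_const_prefix:
  assumes "0 < m" and "0 \<le> s"
  shows "lp_norm \<infinity> (\<lambda>k. if k < m then s else 0) = ereal s"
  unfolding lp_norm_def using assms
  by (intro antisym) (auto intro!: SUP_least SUP_upper2[where i = 0])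

lemma exists_nat_powr_between:
  assumes "1 \<le> q" and "0 < x" and "x \<le> 1"
  shows "\<exists>m>0. x / 2 \<le> real m powr (- 1 / q) \<and> real m powr (- 1 / q) \<le> x"
proof -
  define T where "T = x powr (- q)"
  have T: "1 \<le> T" "T powr (- 1 / q) = x"
    using assms powr_mono'[of "- q" 0 x] by (auto simp: T_def powr_powr)
  define m where "m = nat \<lceil>T\<rceil>"
  have m: "T \<le> real m" "real m \<le> 2 * T" using T(1) unfolding m_def by linarith+
  have "x / 2 \<le> 2 powr (- 1 / q) * x"
    using assms powr_mono[of "-1" "- 1 / q" 2] by (simp add: powr_minus field_simps)
  also have "\<dots> = (2 * T) powr (- 1 / q)" using T by (simp add: powr_mult)
  also have "\<dots> \<le> real m powr (- 1 / q)" using assms T m by (intro powr_mono2') auto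
  finally have "x / 2 \<le> real m powr (- 1 / q)" .
  moreover have "real m powr (- 1 / q) \<le> x" using assms T m by (auto intro!: powr_mono2')
  ultimately show ?thesis using m T by (intro exI[of _ m]) auto
qed

lemma bernoulli_gap_ge:
  fixes c t :: real
  assumes "0 < m" and "0 \<le> t" and "t \<le> 1" and "real n / m \<le> t / 2"
  shows "c\<^sup>2 * (t / 2) \<le> ((real m - 1) / m) ^ n * c\<^sup>2 - (c - c * t)\<^sup>2"
proof -
  have "(1 - t)\<^sup>2 \<le> 1 - t" using assms(2,3) by (simp add: power2_eq_square mult_left_le)
  then have "c\<^sup>2 * (t / 2) \<le> c\<^sup>2 * (1 - real n / m) - c\<^sup>2 * (1 - t)\<^sup>2"
    using assms(4) mult_left_mono[of "t / 2" "1 - real n / m - (1 - t)\<^sup>2" "c\<^sup>2"]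
    by (simp add: right_diff_distrib)
  also have "\<dots> \<le> ((real m - 1) / m) ^ n * c\<^sup>2 - c\<^sup>2 * (1 - t)\<^sup>2"
    using mult_left_mono[OF bernoulli_ratio[OF assms(1), of n], of "c\<^sup>2"] by (simp add: mult.commute)
  also have "c\<^sup>2 * (1 - t)\<^sup>2 = (c - c * t)\<^sup>2" by (simp add: power2_eq_square algebra_simps)
  finally show ?thesis .
qed

lemma minimax_risk_ge_half_sq:
  fixes p :: ereal
  assumes "infinite_dimensional TYPE('v::real_inner)" and "infinite_dimensional TYPE('w::real_inner)"
    and "1 \<le> n" and "0 \<le> s" and "s \<le> c"
    and "lp_norm p (\<lambda>k. if k < 2 * n then s else 0) \<le> ereal c"
  shows "ereal (s\<^sup>2 / 2) \<le> minimax_risk n (cball (0::'v) 1) (cball (0::'w) c) (schatten_ball p c)"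
proof -
  have "ereal (s\<^sup>2 / 2) \<le> ereal (((real (2 * n) - 1) / real (2 * n)) ^ n * s\<^sup>2 - (s - s)\<^sup>2)"
    using mult_right_mono[OF half_le_ratio_power[OF assms(3)], of "s\<^sup>2"] by simp
  also have "\<dots> \<le> minimax_risk n (cball (0::'v) 1) (cball (0::'w) c) (schatten_ball p c)"
    using assms by (intro minimax_risk_ge_sign_bound) auto
  finally show ?thesis .
qed

lemma minimax_risk_ge_infinity:
  assumes "infinite_dimensional TYPE('v::real_inner)" and "infinite_dimensional TYPE('w::real_inner)"
    and "1 \<le> n" and "0 < c"
  shows "ereal (c\<^sup>2 / 12) \<le> minimax_risk n (cball (0::'v) 1) (cball (0::'w) c) (schatten_ball \<infinity> c)"
proof -
  have "ereal (c\<^sup>2 / 12) \<le> ereal (c\<^sup>2 / 2)" by simp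
  also have "\<dots> \<le> minimax_risk n (cball (0::'v) 1) (cball (0::'w) c) (schatten_ball \<infinity> c)"
    using assms by (intro minimax_risk_ge_half_sq) (simp_all add: lp_norm_infinity_const_prefix)
  finally show ?thesis .
qed

lemma minimax_risk_ge_fast_rate:
  assumes "infinite_dimensional TYPE('v::real_inner)" and "infinite_dimensional TYPE('w::real_inner)"
    and n: "1 \<le> n" and c: "0 < c" and q: "1 \<le> q"
  shows "ereal (c\<^sup>2 / 12 * real n powr (- 2 / q))
    \<le> minimax_risk n (cball (0::'v) 1) (cball (0::'w) c) (schatten_ball (ereal q) c)"
proof -
  define s where "s = c * real (2 * n) powr (- 1 / q)"
  have "real (2 * n) powr (- 1 / q) \<le> 1"
    using n q powr_mono[of "- 1 / q" 0 "real (2 * n)"] by simp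
  then have s: "0 \<le> s" "s \<le> c" using c by (auto simp: s_def mult_left_le)
  have lp: "lp_norm (ereal q) (\<lambda>k. if k < 2 * n then s else 0) = ereal c"
    using q s n by (simp add: lp_norm_const_prefix s_def powr_minus field_simps)
  have "(1 / 4) * real n powr (- 2 / q) \<le> 2 powr (- 2 / q) * real n powr (- 2 / q)"
    using q powr_mono[of "-2" "- 2 / q" 2] by (intro mult_right_mono) (auto simp: powr_minus field_simps)
  also have "\<dots> = real (2 * n) powr (- 2 / q)" by (simp add: powr_mult)
  also have "\<dots> = (real (2 * n) powr (- 1 / q))\<^sup>2"
    using n by (simp add: power2_eq_square powr_add[symmetric])
  finally have "c\<^sup>2 * (real n powr (- 2 / q) / 4) / 2 \<le> s\<^sup>2 / 2"
    unfolding s_def power_mult_distrib by (intro divide_right_mono mult_left_mono) auto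
  moreover have "c\<^sup>2 / 12 * real n powr (- 2 / q) \<le> c\<^sup>2 * (real n powr (- 2 / q) / 4) / 2"
    by (simp add: field_simps)
  ultimately have "c\<^sup>2 / 12 * real n powr (- 2 / q) \<le> s\<^sup>2 / 2" by linarith
  then have "ereal (c\<^sup>2 / 12 * real n powr (- 2 / q)) \<le> ereal (s\<^sup>2 / 2)" by simp
  also have "\<dots> \<le> minimax_risk n (cball (0::'v) 1) (cball (0::'w) c) (schatten_ball (ereal q) c)"
    using assms s lp by (intro minimax_risk_ge_half_sq) auto
  finally show ?thesis .
qed

lemma exists_support_size_slow_rate:
  fixes q :: real
  assumes q: "2 \<le> q" and n: "1 \<le> n"
  shows "\<exists>m>0. real n / m \<le> real m powr (- 1 / q) / 2
               \<and> real n powr (- 1 / (q - 1)) / 8 \<le> real m powr (- 1 / q) / 2"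
proof -
  define t0 where "t0 = real (2 * n) powr (- 1 / (q - 1))"
  have t0: "0 < t0" "t0 \<le> 1"
    using assms powr_mono[of "- 1 / (q - 1)" 0 "real (2 * n)"] by (auto simp: t0_def)
  then obtain m where m: "0 < m" "t0 / 2 \<le> real m powr (- 1 / q)" "real m powr (- 1 / q) \<le> t0"
    using exists_nat_powr_between[of q t0] q by auto
  define t where "t = real m powr (- 1 / q)"
  have t: "0 < t" using m(1) by (simp add: t_def)
  have "real n / m = real n * t powr q"
    unfolding t_def powr_powr using q m(1) by (simp add: powr_minus_divide)
  also have "\<dots> = t * (real n * t powr (q - 1))"
    using t powr_add[of t 1 "q - 1"] by simp
  also have "\<dots> \<le> t * (real n * t0 powr (q - 1))"
    using q t m(3) unfolding t_def by (intro mult_left_mono powr_mono2) auto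
  also have "t0 powr (q - 1) = 1 / real (2 * n)"
    unfolding t0_def powr_powr using q n by (simp add: powr_minus_divide)
  finally have "real n / m \<le> t / 2" using n by simp
  moreover have "1 / 2 * real n powr (- 1 / (q - 1)) \<le> 2 powr (- 1 / (q - 1)) * real n powr (- 1 / (q - 1))"
    using q powr_mono[of "- 1" "- 1 / (q - 1)" 2] by (intro mult_right_mono) (auto simp: powr_minus field_simps)
  then have "real n powr (- 1 / (q - 1)) / 2 \<le> t0" by (simp add: t0_def powr_mult)
  ultimately show ?thesis using m unfolding t_def by (intro exI[of _ m]) auto
qed

lemma minimax_risk_ge_slow_rate:
  assumes "infinite_dimensional TYPE('v::real_inner)" and "infinite_dimensional TYPE('w::real_inner)"
    and n: "1 \<le> n" and c: "0 < c" and q: "2 \<le> q"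
  shows "ereal (c\<^sup>2 / 12 * real n powr (- 1 / (q - 1)))
    \<le> minimax_risk n (cball (0::'v) 1) (cball (0::'w) c) (schatten_ball (ereal q) c)"
proof -
  obtain m where m: "0 < m" "real n / m \<le> real m powr (- 1 / q) / 2"
    and rate: "real n powr (- 1 / (q - 1)) / 8 \<le> real m powr (- 1 / q) / 2"
    using exists_support_size_slow_rate[OF q n] by blast
  define t where "t = real m powr (- 1 / q)"
  have t: "0 \<le> t" "t \<le> 1"
    using m(1) q powr_mono[of "- 1 / q" 0 "real m"] by (auto simp: t_def)
  have lp: "lp_norm (ereal q) (\<lambda>k. if k < m then c * t else 0) = ereal c"
    using q c t m(1) by (simp add: lp_norm_const_prefix t_def powr_minus field_simps)
  have "c\<^sup>2 / 12 * real n powr (- 1 / (q - 1)) \<le> c\<^sup>2 * (real n powr (- 1 / (q - 1)) / 8)"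
    by (simp add: field_simps)
  also have "\<dots> \<le> c\<^sup>2 * (t / 2)"
    using rate unfolding t_def[symmetric] by (rule mult_left_mono) simp
  also have "\<dots> \<le> ((real m - 1) / m) ^ n * c\<^sup>2 - (c - c * t)\<^sup>2"
    using m t unfolding t_def[symmetric] by (intro bernoulli_gap_ge) auto
  finally have "ereal (c\<^sup>2 / 12 * real n powr (- 1 / (q - 1)))
      \<le> ereal (((real m - 1) / m) ^ n * c\<^sup>2 - (c - c * t)\<^sup>2)" by simp
  also have "\<dots> \<le> minimax_risk n (cball (0::'v) 1) (cball (0::'w) c) (schatten_ball (ereal q) c)"
    using assms m t c lp by (intro minimax_risk_ge_sign_bound) (auto simp: mult_left_le)
  finally show ?thesis .
qed

lemma schatten_rate_ereal_less_two:
  assumes "1 \<le> q" and "q < 2" and "1 \<le> n"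
  shows "schatten_rate (ereal q) n = real n powr (- 2 / q)"
proof (cases "q = 1")
  case False
  then have "- 1 / (q - 1) \<le> - 2 / q" using assms(1,2) by (simp add: field_simps)
  then have "real n powr (- 1 / (q - 1)) \<le> real n powr (- 2 / q)"
    using assms(3) by (intro powr_mono) auto
  then show ?thesis using False by (simp add: schatten_rate_def one_ereal_def)
qed (simp add: schatten_rate_def one_ereal_def)

theorem theorem5:
  fixes c :: real and p :: ereal and n :: nat
  assumes V: "separable_hilbert TYPE('v::{real_inner,complete_space})"
      and V_inf: "infinite_dimensional TYPE('v)"
      and W: "separable_hilbert TYPE('w::{real_inner,complete_space})"
      and W_inf: "infinite_dimensional TYPE('w)"
      and c: "c > 0"
      and p: "1 \<le> p"
      and n: "1 \<le> n"
  shows "ereal (c\<^sup>2 / 12 * schatten_rate p n)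
           \<le> minimax_risk n (cball (0::'v) 1) (cball (0::'w) c)
                (schatten_ball p c :: ('v \<Rightarrow> 'w) set)"
proof -
  consider "p = \<infinity>" | q where "p = ereal q" "1 \<le> q" "q < 2" | q where "p = ereal q" "2 \<le> q"
    using p by (cases p) (auto, linarith)
  then show ?thesis
  proof cases
    case 1
    then show ?thesis
      using minimax_risk_ge_infinity[OF V_inf W_inf n c] by (simp add: schatten_rate_def)
  next
    case (2 q)
    then show ?thesis
      using minimax_risk_ge_fast_rate[OF V_inf W_inf n c, of q] n
      by (simp add: schatten_rate_ereal_less_two)
  next
    case (3 q)
    then show ?thesis
      using minimax_risk_ge_fast_rate[OF V_inf W_inf n c, of q] minimax_risk_ge_slow_rate[OF V_inf W_inf n c, of q]
      by (simp add: schatten_rate_def max_mult_distrib_left max_def)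
  qed
qed

end
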